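(* Let $X$ be a nonempty set, $G\le S_X$, and let $(G,(\lambda_x:x\in X/G))$ and $(G,(\kappa_x:x\in X/G))$ be rack envelopes (resp. quandle envelopes). For every $x\in X/G$ and $y\in xG$ let $g_y\in G$ be such that $xg_y=y$. Then the corresponding racks (resp. quandles) $\mathbf R(G,(\lambda_x))$ and $\mathbf R(G,(\kappa_x))$ are isomorphic if and only if there is $f\in N_{S_X}(G)$ such that $$\kappa_x=((\lambda_{yg_y^{-1}})^{g_y})^f$$ for every $x\in X/G$, where $y=xf^{-1}$.
   Context: Permutations act on the right ($xf$ is the image of $x$ under $f$; $fg$ means $f$ first, then $g$); $g^f=f^{-1}gf$, $f^G=\{f^g:g\in G\}$. For $G\le S_X$, $xG$ is the orbit of $x$, $G_x$ its stabilizer, $X/G$ a fixed complete set of orbit representatives; $C_G(H)$, $N_G(H)$, $Z(H)$ denote centralizer, normalizer and center. A left quasigroup is a groupoid $(X,* )$ whose left translations $L_x$ ($yL_x=x*y$) are bijections; a rack is a left quasigroup with $x*(y*z)=(x*y)*(x*z)$; a quandle is a rack with $x*x=x$; $\mathrm{LMlt}(X,* )=\langle L_x:x\in X\rangle$. A pair $(G,(\lambda_x:x\in X/G))$ with $G\le S_X$ is a rack envelope (resp. quandle envelope) if $\lambda_x\in C_G(G_x)$ (resp. $\lambda_x\in Z(G_x)$) for every $x\in X/G$ and $\langle\bigcup_{x\in X/G}\lambda_x^G\rangle=G$. The rack corresponding to such an envelope is $\mathbf R(G,\Lambda)=(X,* )$ defined by $L_y=(\lambda_x)^{g}$ whenever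 $x\in X/G$, $y\in xG$ and $g\in G$ with $xg=y$ (independent of the choice of $g$); its left multiplication group is $G$. *)

theory Defs
  imports "HOL-Combinatorics.Permutations"
begin

text \<open>Permutations of X are functions f with f permutes X (identity outside X).
  Right action: x f is written f x; the product fg (f first, then g) is g \<circ> f.\<close>

definition perm_group :: "'a set \<Rightarrow> ('a \<Rightarrow> 'a) set \<Rightarrow> bool" where
  "perm_group X G \<longleftrightarrow> G \<subseteq> {f. f permutes X} \<and> id \<in> G
     \<and> (\<forall>f\<in>G. \<forall>g\<in>G. g \<circ> f \<in> G) \<and> (\<forall>f\<in>G. inv f \<in> G)"

text \<open>g^f = f^{-1} g f (apply f^{-1}, then g, then f).\<close>
definition perm_conj :: "('a \<Rightarrow> 'a) \<Rightarrow> ('a \<Rightarrow> 'a) \<Rightarrow> ('a \<Rightarrow> 'a)" where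
  "perm_conj g f = f \<circ> g \<circ> inv f"

definition generated_perm_group :: "'a set \<Rightarrow> ('a \<Rightarrow> 'a) set \<Rightarrow> ('a \<Rightarrow> 'a) set" where
  "generated_perm_group X S = \<Inter>{H. perm_group X H \<and> S \<subseteq> H}"

definition perm_orbit :: "('a \<Rightarrow> 'a) set \<Rightarrow> 'a \<Rightarrow> 'a set" where
  "perm_orbit G x = (\<lambda>g. g x) ` G"

definition perm_stabilizer :: "('a \<Rightarrow> 'a) set \<Rightarrow> 'a \<Rightarrow> ('a \<Rightarrow> 'a) set" where
  "perm_stabilizer G x = {g \<in> G. g x = x}"

definition perm_centralizer :: "('a \<Rightarrow> 'a) set \<Rightarrow> ('a \<Rightarrow> 'a) set \<Rightarrow> ('a \<Rightarrow> 'a) set" where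
  "perm_centralizer G H = {g \<in> G. \<forall>h\<in>H. g \<circ> h = h \<circ> g}"

definition perm_center :: "('a \<Rightarrow> 'a) set \<Rightarrow> ('a \<Rightarrow> 'a) set" where
  "perm_center H = perm_centralizer H H"

definition sym_normalizer :: "'a set \<Rightarrow> ('a \<Rightarrow> 'a) set \<Rightarrow> ('a \<Rightarrow> 'a) set" where
  "sym_normalizer X G = {f. f permutes X \<and> (\<lambda>g. perm_conj g f) ` G = G}"

definition orbit_reps :: "'a set \<Rightarrow> ('a \<Rightarrow> 'a) set \<Rightarrow> 'a set \<Rightarrow> bool" where
  "orbit_reps X G T \<longleftrightarrow> T \<subseteq> X \<and> (\<forall>y\<in>X. \<exists>!x. x \<in> T \<and> y \<in> perm_orbit G x)"

definition rack_envelope ::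
  "'a set \<Rightarrow> ('a \<Rightarrow> 'a) set \<Rightarrow> 'a set \<Rightarrow> ('a \<Rightarrow> 'a \<Rightarrow> 'a) \<Rightarrow> bool" where
  "rack_envelope X G T lam \<longleftrightarrow>
     (\<forall>x\<in>T. lam x \<in> perm_centralizer G (perm_stabilizer G x))
     \<and> generated_perm_group X (\<Union>x\<in>T. (\<lambda>g. perm_conj (lam x) g) ` G) = G"

definition quandle_envelope ::
  "'a set \<Rightarrow> ('a \<Rightarrow> 'a) set \<Rightarrow> 'a set \<Rightarrow> ('a \<Rightarrow> 'a \<Rightarrow> 'a) \<Rightarrow> bool" where
  "quandle_envelope X G T lam \<longleftrightarrow>
     (\<forall>x\<in>T. lam x \<in> perm_center (perm_stabilizer G x))
     \<and> generated_perm_group X (\<Union>x\<in>T. (\<lambda>g. perm_conj (lam x) g) ` G) = G"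

definition env_rep :: "('a \<Rightarrow> 'a) set \<Rightarrow> 'a set \<Rightarrow> 'a \<Rightarrow> 'a" where
  "env_rep G T y = (THE x. x \<in> T \<and> y \<in> perm_orbit G x)"

text \<open>The operation of R(G,Lambda): y * z = z L_y with L_y = (lam x)^g, x g = y.\<close>
definition env_op ::
  "('a \<Rightarrow> 'a) set \<Rightarrow> 'a set \<Rightarrow> ('a \<Rightarrow> 'a \<Rightarrow> 'a) \<Rightarrow> 'a \<Rightarrow> 'a \<Rightarrow> 'a" where
  "env_op G T lam y z =
     (let x = env_rep G T y; g = (SOME g. g \<in> G \<and> g x = y) in perm_conj (lam x) g z)"

definition groupoid_iso ::
  "'a set \<Rightarrow> ('a \<Rightarrow> 'a \<Rightarrow> 'a) \<Rightarrow> ('a \<Rightarrow> 'a \<Rightarrow> 'a) \<Rightarrow> ('a \<Rightarrow> 'a) \<Rightarrow> bool" where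
  "groupoid_iso X op1 op2 \<phi> \<longleftrightarrow> bij_betw \<phi> X X
     \<and> (\<forall>y\<in>X. \<forall>z\<in>X. \<phi> (op1 y z) = op2 (\<phi> y) (\<phi> z))"

end

theory Submission
  imports Defs
begin

text \<open>An isomorphism of the racks is, after extension by the identity outside X, a permutation f
  of X with L'(f y) = (L y)^f for all y. Because the L y generate G (and the L' y too), such
  an f normalizes G. The translations are G-equivariant, L (y k) = (L y)^k for k in G, so
  for f normalizing G the identity L'(f y) = (L y)^f holds everywhere as soon as it holds
  at the orbit representatives, where L' x = \<kappa>_x and L y = (\<lambda>_{y g_y^-1})^{g_y}.\<close>

lemma perm_conj_id_right [simp]: "perm_conj l id = l"
  by (simp add: perm_conj_def)

lemma perm_conj_id_left: "bij p \<Longrightarrow> perm_conj id p = id"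
  by (simp add: perm_conj_def fun_eq_iff bij_is_surj surj_f_inv_f)

lemma perm_conj_apply: "bij f \<Longrightarrow> perm_conj l f (f y) = f (l y)"
  by (simp add: perm_conj_def bij_is_inj)

lemma perm_conj_eq_iff: "bij f \<Longrightarrow> perm_conj l f = m \<longleftrightarrow> f \<circ> l = m \<circ> f"
  unfolding perm_conj_def
  by (auto simp: fun_eq_iff bij_is_inj bij_is_surj surj_f_inv_f) (metis bij_inv_eq_iff)

lemma perm_conj_commuting:
  assumes "bij h" "l \<circ> h = h \<circ> l"
  shows "perm_conj l h = l"
  using assms unfolding perm_conj_def
  by (metis bij_is_surj comp_id o_assoc surj_iff)

lemma perm_conj_conj:
  assumes "bij f" "bij g"
  shows "perm_conj l (f \<circ> g) = perm_conj (perm_conj l g) f"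
  unfolding perm_conj_def o_inv_distrib[OF assms] by (simp add: o_assoc)

lemma perm_conj_inv_cancel [simp]:
  assumes "bij f"
  shows "perm_conj (perm_conj l f) (inv f) = l" "perm_conj (perm_conj l (inv f)) f = l"
  using assms unfolding perm_conj_def
  by (simp_all add: fun_eq_iff bij_is_inj bij_is_surj inv_inv_eq surj_f_inv_f)

lemma perm_conj_comp: "bij p \<Longrightarrow> perm_conj (g \<circ> f) p = perm_conj g p \<circ> perm_conj f p"
  by (simp add: perm_conj_def fun_eq_iff bij_is_inj)

lemma perm_conj_inv: "bij p \<Longrightarrow> bij g \<Longrightarrow> perm_conj (inv g) p = inv (perm_conj g p)"
  unfolding perm_conj_def
  by (simp add: o_inv_distrib bij_comp bij_imp_bij_inv inv_inv_eq o_assoc)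

lemma perm_group_permutes: "perm_group X G \<Longrightarrow> g \<in> G \<Longrightarrow> g permutes X"
  and perm_group_id: "perm_group X G \<Longrightarrow> id \<in> G"
  and perm_group_comp: "perm_group X G \<Longrightarrow> f \<in> G \<Longrightarrow> g \<in> G \<Longrightarrow> g \<circ> f \<in> G"
  and perm_group_inv: "perm_group X G \<Longrightarrow> f \<in> G \<Longrightarrow> inv f \<in> G"
  unfolding perm_group_def by auto

lemma perm_group_bij: "perm_group X G \<Longrightarrow> g \<in> G \<Longrightarrow> bij g"
  by (metis perm_group_permutes permutes_bij)

lemma perm_group_apply_closed: "perm_group X G \<Longrightarrow> g \<in> G \<Longrightarrow> x \<in> X \<Longrightarrow> g x \<in> X"
  by (metis perm_group_permutes permutes_in_image)

lemma perm_group_conj: "perm_group X G \<Longrightarrow> l \<in> G \<Longrightarrow> g \<in> G \<Longrightarrow> perm_conj l g \<in> G"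
  unfolding perm_conj_def by (simp add: perm_group_comp perm_group_inv)

lemma perm_group_conj_preimage:
  assumes G: "perm_group X G" and p: "p permutes X"
  shows "perm_group X {g \<in> G. perm_conj g p \<in> G}"
  unfolding perm_group_def
proof (intro conjI ballI)
  have "bij p" using p by (rule permutes_bij)
  show "{g \<in> G. perm_conj g p \<in> G} \<subseteq> {f. f permutes X}"
    using G perm_group_permutes by blast
  show "id \<in> {g \<in> G. perm_conj g p \<in> G}"
    using G \<open>bij p\<close> by (simp add: perm_group_id perm_conj_id_left)
  show "g \<circ> f \<in> {g \<in> G. perm_conj g p \<in> G}"
    if "f \<in> {g \<in> G. perm_conj g p \<in> G}" "g \<in> {g \<in> G. perm_conj g p \<in> G}" for f g
    using G that \<open>bij p\<close> by (simp add: perm_group_comp perm_conj_comp)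
  show "inv f \<in> {g \<in> G. perm_conj g p \<in> G}" if "f \<in> {g \<in> G. perm_conj g p \<in> G}" for f
    using G that \<open>bij p\<close> by (simp add: perm_group_inv perm_conj_inv perm_group_bij)
qed

lemma generated_perm_group_least:
  "perm_group X H \<Longrightarrow> S \<subseteq> H \<Longrightarrow> generated_perm_group X S \<subseteq> H"
  unfolding generated_perm_group_def by auto

lemma generated_perm_group_conj_closed:
  assumes G: "perm_group X G" and gen: "generated_perm_group X S = G" and "S \<subseteq> G"
    and p: "p permutes X" and conj_S: "\<And>s. s \<in> S \<Longrightarrow> perm_conj s p \<in> G"
    and g: "g \<in> G"
  shows "perm_conj g p \<in> G"
proof -
  have "S \<subseteq> {g \<in> G. perm_conj g p \<in> G}"
    using \<open>S \<subseteq> G\<close> conj_S by blast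
  then have "generated_perm_group X S \<subseteq> {g \<in> G. perm_conj g p \<in> G}"
    by (rule generated_perm_group_least[OF perm_group_conj_preimage[OF G p]])
  then show ?thesis using g gen by blast
qed

lemma sym_normalizerI:
  assumes f: "f permutes X"
    and conj: "\<And>g. g \<in> G \<Longrightarrow> perm_conj g f \<in> G"
    and inv_conj: "\<And>g. g \<in> G \<Longrightarrow> perm_conj g (inv f) \<in> G"
  shows "f \<in> sym_normalizer X G"
proof -
  have "g \<in> (\<lambda>g. perm_conj g f) ` G" if "g \<in> G" for g
  proof
    show "g = perm_conj (perm_conj g (inv f)) f"
      using permutes_bij[OF f] by simp
  qed (use that inv_conj in blast)
  then show ?thesis
    unfolding sym_normalizer_def using f conj by blast
qed

lemma sym_normalizer_inv_conj:
  assumes "f \<in> sym_normalizer X G" "g \<in> G"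
  shows "perm_conj g (inv f) \<in> G"
proof -
  from assms obtain g' where "g' \<in> G" "g = perm_conj g' f" and "f permutes X"
    unfolding sym_normalizer_def by blast
  then show ?thesis by (simp add: permutes_bij)
qed

lemma ex_groupoid_iso_iff_intertwiner:
  assumes op1: "\<And>y. y \<in> X \<Longrightarrow> op1 y permutes X" and op2: "\<And>y. y \<in> X \<Longrightarrow> op2 y permutes X"
  shows "(\<exists>\<phi>. groupoid_iso X op1 op2 \<phi>)
    \<longleftrightarrow> (\<exists>f. f permutes X \<and> (\<forall>y\<in>X. op2 (f y) = perm_conj (op1 y) f))"
proof
  assume "\<exists>\<phi>. groupoid_iso X op1 op2 \<phi>"
  then obtain \<phi> where bij: "bij_betw \<phi> X X"
    and hom: "\<And>y z. y \<in> X \<Longrightarrow> z \<in> X \<Longrightarrow> \<phi> (op1 y z) = op2 (\<phi> y) (\<phi> z)"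
    unfolding groupoid_iso_def by blast
  define f where "f a = (if a \<in> X then \<phi> a else a)" for a
  have "bij_betw f X X"
    using bij by (rule bij_betw_cong[THEN iffD1, rotated]) (simp add: f_def)
  then have f: "f permutes X"
    by (rule bij_imp_permutes) (simp add: f_def)
  have "perm_conj (op1 y) f = op2 (f y)" if y: "y \<in> X" for y
    unfolding perm_conj_eq_iff[OF permutes_bij[OF f]]
  proof
    fix z
    show "(f \<circ> op1 y) z = (op2 (f y) \<circ> f) z"
    proof (cases "z \<in> X")
      case True
      then show ?thesis
        using y hom op1[OF y] by (simp add: f_def permutes_in_image)
    next
      case False
      then show ?thesis
        using op1[OF y] op2[OF permutes_in_image[OF f, THEN iffD2, OF y]]
        by (simp add: f_def permutes_not_in)
    qed
  qed
  then show "\<exists>f. f permutes X \<and> (\<forall>y\<in>X. op2 (f y) = perm_conj (op1 y) f)"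
    using f by metis
next
  assume "\<exists>f. f permutes X \<and> (\<forall>y\<in>X. op2 (f y) = perm_conj (op1 y) f)"
  then obtain f where f: "f permutes X" and conj: "\<And>y. y \<in> X \<Longrightarrow> op2 (f y) = perm_conj (op1 y) f"
    by blast
  have "groupoid_iso X op1 op2 f"
    unfolding groupoid_iso_def
    using permutes_imp_bij[OF f] conj permutes_bij[OF f] by (simp add: perm_conj_apply)
  then show "\<exists>\<phi>. groupoid_iso X op1 op2 \<phi>" by blast
qed

lemma quandle_envelope_imp_rack_envelope:
  "quandle_envelope X G T lam \<Longrightarrow> rack_envelope X G T lam"
  unfolding quandle_envelope_def rack_envelope_def perm_center_def perm_centralizer_def
    perm_stabilizer_def
  by auto

locale orbit_transversal =
  fixes X :: "'a set" and G :: "('a \<Rightarrow> 'a) set" and T :: "'a set"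
  assumes perm_group: "perm_group X G" and orbit_reps: "orbit_reps X G T"
begin

lemma env_rep:
  assumes "y \<in> X"
  shows "env_rep G T y \<in> T" and "\<exists>g\<in>G. g (env_rep G T y) = y"
proof -
  have "\<exists>!x. x \<in> T \<and> y \<in> perm_orbit G x"
    using orbit_reps assms unfolding orbit_reps_def by blast
  then have rep: "env_rep G T y \<in> T \<and> y \<in> perm_orbit G (env_rep G T y)"
    unfolding env_rep_def by (rule theI')
  then show "env_rep G T y \<in> T" ..
  from rep show "\<exists>g\<in>G. g (env_rep G T y) = y"
    unfolding perm_orbit_def by (simp add: image_iff eq_commute)
qed

lemma env_rep_apply:
  assumes x: "x \<in> T" and g: "g \<in> G"
  shows "env_rep G T (g x) = x"
proof -
  have "x \<in> X" using x orbit_reps unfolding orbit_reps_def by blast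
  then have "\<exists>!x'. x' \<in> T \<and> g x \<in> perm_orbit G x'"
    using orbit_reps perm_group_apply_closed[OF perm_group g] unfolding orbit_reps_def by blast
  moreover have "x \<in> T \<and> g x \<in> perm_orbit G x"
    using x g unfolding perm_orbit_def by blast
  ultimately show ?thesis
    unfolding env_rep_def by (rule the1_equality)
qed

lemma T_subset: "T \<subseteq> X"
  using orbit_reps unfolding orbit_reps_def by blast

end

locale rack_env = orbit_transversal +
  fixes lam :: "'a \<Rightarrow> 'a \<Rightarrow> 'a"
  assumes rack_envelope: "rack_envelope X G T lam"
begin

lemma lam_in_G: "x \<in> T \<Longrightarrow> lam x \<in> G"
  using rack_envelope unfolding rack_envelope_def perm_centralizer_def by blast

lemma lam_commutes_stabilizer:
  "x \<in> T \<Longrightarrow> h \<in> G \<Longrightarrow> h x = x \<Longrightarrow> lam x \<circ> h = h \<circ> lam x"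
  using rack_envelope
  unfolding rack_envelope_def perm_centralizer_def perm_stabilizer_def by blast

lemma conj_lam_well_defined:
  assumes x: "x \<in> T" and g: "g \<in> G" and g': "g' \<in> G" and "g x = g' x"
  shows "perm_conj (lam x) g = perm_conj (lam x) g'"
proof -
  define h where "h = inv g' \<circ> g"
  have bij: "bij g'" "bij h"
    using perm_group g g' by (simp_all add: h_def perm_group_bij perm_group_comp perm_group_inv)
  have "h \<in> G"
    using perm_group g g' by (simp add: h_def perm_group_comp perm_group_inv)
  moreover have "h x = x"
    using \<open>g x = g' x\<close> bij(1) by (simp add: h_def bij_is_inj)
  ultimately have "perm_conj (lam x) h = lam x"
    using bij(2) x by (simp add: perm_conj_commuting lam_commutes_stabilizer)
  moreover have "g = g' \<circ> h"
    using bij(1) by (simp add: h_def fun_eq_iff bij_is_surj surj_f_inv_f)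
  ultimately show ?thesis
    using bij by (simp add: perm_conj_conj)
qed

lemma env_op_apply_rep:
  assumes x: "x \<in> T" and g: "g \<in> G"
  shows "env_op G T lam (g x) = perm_conj (lam x) g"
proof -
  define g0 where "g0 = (SOME g0. g0 \<in> G \<and> g0 x = g x)"
  have "g0 \<in> G \<and> g0 x = g x"
    unfolding g0_def by (rule someI[of _ g]) (use g in blast)
  then have "perm_conj (lam x) g0 = perm_conj (lam x) g"
    using conj_lam_well_defined x g by blast
  then show ?thesis
    unfolding env_op_def Let_def env_rep_apply[OF x g] g0_def[symmetric] .
qed

lemma env_op_rep: "x \<in> T \<Longrightarrow> env_op G T lam x = lam x"
  using env_op_apply_rep[of x id] perm_group by (simp add: perm_group_id)

lemma env_op_eq_conj:
  assumes y: "y \<in> X" and g: "g \<in> G" and gy: "g (env_rep G T y) = y"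
  shows "env_op G T lam y = perm_conj (lam (inv g y)) g"
proof -
  have "inv g y = env_rep G T y"
    using gy perm_group_bij[OF perm_group g] by (metis bij_inv_eq_iff)
  then show ?thesis
    using env_op_apply_rep[OF env_rep(1)[OF y] g] gy by simp
qed

lemma env_op_in_G: "y \<in> X \<Longrightarrow> env_op G T lam y \<in> G"
  using env_rep[of y] env_op_apply_rep lam_in_G perm_group_conj[OF perm_group] by metis

lemma env_op_permutes: "y \<in> X \<Longrightarrow> env_op G T lam y permutes X"
  using env_op_in_G perm_group_permutes[OF perm_group] by blast

lemma env_op_equivariant:
  assumes y: "y \<in> X" and k: "k \<in> G"
  shows "env_op G T lam (k y) = perm_conj (env_op G T lam y) k"
proof -
  obtain g where g: "g \<in> G" "g (env_rep G T y) = y"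
    using env_rep(2)[OF y] by blast
  have "env_op G T lam (k y) = env_op G T lam ((k \<circ> g) (env_rep G T y))"
    using g by simp
  also have "\<dots> = perm_conj (lam (env_rep G T y)) (k \<circ> g)"
    using env_op_apply_rep env_rep(1)[OF y] perm_group_comp[OF perm_group g(1) k] by blast
  also have "\<dots> = perm_conj (env_op G T lam y) k"
    using env_op_apply_rep[OF env_rep(1)[OF y] g(1)] g(2) perm_group_bij[OF perm_group] g(1) k
    by (simp add: perm_conj_conj)
  finally show ?thesis .
qed

lemma env_op_image: "env_op G T lam ` X = (\<Union>x\<in>T. (\<lambda>g. perm_conj (lam x) g) ` G)"
proof
  show "env_op G T lam ` X \<subseteq> (\<Union>x\<in>T. (\<lambda>g. perm_conj (lam x) g) ` G)"
  proof
    fix l assume "l \<in> env_op G T lam ` X"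
    then obtain y where y: "y \<in> X" and l: "l = env_op G T lam y" by blast
    obtain g where g: "g \<in> G" "g (env_rep G T y) = y"
      using env_rep(2)[OF y] by blast
    have "l = perm_conj (lam (env_rep G T y)) g"
      using l env_op_apply_rep[OF env_rep(1)[OF y] g(1)] g(2) by simp
    then show "l \<in> (\<Union>x\<in>T. (\<lambda>g. perm_conj (lam x) g) ` G)"
      using env_rep(1)[OF y] g(1) by blast
  qed
  show "(\<Union>x\<in>T. (\<lambda>g. perm_conj (lam x) g) ` G) \<subseteq> env_op G T lam ` X"
  proof (intro subsetI, elim UN_E imageE)
    fix l x g assume "x \<in> T" "g \<in> G" "l = perm_conj (lam x) g"
    moreover have "g x \<in> X"
      using \<open>x \<in> T\<close> \<open>g \<in> G\<close> T_subset perm_group_apply_closed[OF perm_group] by blast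
    ultimately show "l \<in> env_op G T lam ` X"
      using env_op_apply_rep by (metis image_eqI)
  qed
qed

lemma generated_env_op: "generated_perm_group X (env_op G T lam ` X) = G"
  using rack_envelope unfolding rack_envelope_def env_op_image by blast

end

locale rack_env_pair = L: rack_env X G T lam + K: rack_env X G T kap
  for X :: "'a set" and G T lam kap
begin

lemma intertwiner_normalizes:
  assumes f: "f permutes X"
    and intertwines: "\<And>y. y \<in> X \<Longrightarrow> env_op G T kap (f y) = perm_conj (env_op G T lam y) f"
  shows "f \<in> sym_normalizer X G"
proof (rule sym_normalizerI[OF f])
  have inv_f: "inv f permutes X" and bij: "bij f"
    using f by (simp_all add: permutes_inv permutes_bij)
  fix g assume g: "g \<in> G"
  show "perm_conj g f \<in> G"
  proof (rule generated_perm_group_conj_closed[OF L.perm_group L.generated_env_op _ f _ g])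
    show "env_op G T lam ` X \<subseteq> G"
      using L.env_op_in_G by blast
    fix s assume "s \<in> env_op G T lam ` X"
    then obtain y where "y \<in> X" "s = env_op G T lam y" by blast
    then show "perm_conj s f \<in> G"
      using intertwines K.env_op_in_G f by (metis permutes_in_image)
  qed
  show "perm_conj g (inv f) \<in> G"
  proof (rule generated_perm_group_conj_closed[OF L.perm_group K.generated_env_op _ inv_f _ g])
    show "env_op G T kap ` X \<subseteq> G"
      using K.env_op_in_G by blast
    fix s assume "s \<in> env_op G T kap ` X"
    then obtain w where w: "w \<in> X" "s = env_op G T kap w" by blast
    then have "s = perm_conj (env_op G T lam (inv f w)) f"
      using intertwines[of "inv f w"] f inv_f by (simp add: permutes_in_image permutes_inverses)
    then show "perm_conj s (inv f) \<in> G"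
      using L.env_op_in_G inv_f w(1) bij by (simp add: permutes_in_image)
  qed
qed

lemma intertwiner_of_reps:
  assumes f: "f \<in> sym_normalizer X G"
    and reps: "\<And>x. x \<in> T \<Longrightarrow> kap x = perm_conj (env_op G T lam (inv f x)) f"
    and y: "y \<in> X"
  shows "env_op G T kap (f y) = perm_conj (env_op G T lam y) f"
proof -
  have fp: "f permutes X"
    using f by (simp add: sym_normalizer_def)
  then have bij: "bij f"
    by (rule permutes_bij)
  define x where "x = env_rep G T (f y)"
  have fy: "f y \<in> X" using fp y by (simp add: permutes_in_image)
  have x: "x \<in> T" "inv f x \<in> X"
    using L.env_rep(1)[OF fy] L.T_subset fp by (auto simp: x_def permutes_in_image permutes_inv)
  obtain h where h: "h \<in> G" "h x = f y"
    using L.env_rep(2)[OF fy] x_def by blast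
  define k where "k = perm_conj h (inv f)"
  have k: "k \<in> G"
    using sym_normalizer_inv_conj[OF f h(1)] by (simp add: k_def)
  have "perm_conj k f = h"
    using bij by (simp add: k_def)
  then have hf: "h \<circ> f = f \<circ> k"
    using bij by (simp add: perm_conj_eq_iff)
  have "f (k (inv f x)) = f y"
    using hf h(2) bij by (metis comp_apply bij_inv_eq_iff)
  then have ky: "k (inv f x) = y"
    using bij by (simp add: bij_is_inj inj_eq)
  have bij_h: "bij h" and bij_k: "bij k"
    using h(1) k L.perm_group by (simp_all add: perm_group_bij)
  have "env_op G T kap (f y) = perm_conj (kap x) h"
    using K.env_op_apply_rep[OF x(1) h(1)] h(2) by simp
  also have "\<dots> = perm_conj (env_op G T lam (inv f x)) (h \<circ> f)"
    using reps[OF x(1)] bij bij_h by (simp add: perm_conj_conj)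
  also have "\<dots> = perm_conj (perm_conj (env_op G T lam (inv f x)) k) f"
    using hf bij bij_k by (simp add: perm_conj_conj)
  also have "\<dots> = perm_conj (env_op G T lam y) f"
    using L.env_op_equivariant[OF x(2) k] ky by simp
  finally show ?thesis .
qed

lemma ex_intertwiner_iff_normalizer:
  "(\<exists>f. f permutes X \<and> (\<forall>y\<in>X. env_op G T kap (f y) = perm_conj (env_op G T lam y) f))
    \<longleftrightarrow> (\<exists>f\<in>sym_normalizer X G. \<forall>x\<in>T. kap x = perm_conj (env_op G T lam (inv f x)) f)"
proof
  assume "\<exists>f. f permutes X \<and> (\<forall>y\<in>X. env_op G T kap (f y) = perm_conj (env_op G T lam y) f)"
  then obtain f where f: "f permutes X"
    and intertwines: "\<forall>y\<in>X. env_op G T kap (f y) = perm_conj (env_op G T lam y) f"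
    by blast
  have "kap x = perm_conj (env_op G T lam (inv f x)) f" if "x \<in> T" for x
  proof -
    have "inv f x \<in> X"
      using that L.T_subset f by (auto simp: permutes_in_image permutes_inv)
    then show ?thesis
      using intertwines K.env_op_rep[OF that] f by (metis permutes_inverses(1))
  qed
  then show "\<exists>f\<in>sym_normalizer X G. \<forall>x\<in>T. kap x = perm_conj (env_op G T lam (inv f x)) f"
    using intertwiner_normalizes[OF f] intertwines by blast
next
  assume "\<exists>f\<in>sym_normalizer X G. \<forall>x\<in>T. kap x = perm_conj (env_op G T lam (inv f x)) f"
  then show "\<exists>f. f permutes X \<and> (\<forall>y\<in>X. env_op G T kap (f y) = perm_conj (env_op G T lam y) f)"
    using intertwiner_of_reps by (metis (no_types, lifting) mem_Collect_eq sym_normalizer_def)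
qed

end

theorem proposition3p5:
  fixes X :: "'a set" and G :: "('a \<Rightarrow> 'a) set" and T :: "'a set"
    and lam kap :: "'a \<Rightarrow> 'a \<Rightarrow> 'a" and gs :: "'a \<Rightarrow> 'a \<Rightarrow> 'a"
  assumes "X \<noteq> {}"
    and "perm_group X G"
    and "orbit_reps X G T"
    and "(rack_envelope X G T lam \<and> rack_envelope X G T kap)
         \<or> (quandle_envelope X G T lam \<and> quandle_envelope X G T kap)"
    and "\<forall>x\<in>T. \<forall>y\<in>perm_orbit G x. gs y \<in> G \<and> gs y x = y"
  shows "(\<exists>\<phi>. groupoid_iso X (env_op G T lam) (env_op G T kap) \<phi>)
     \<longleftrightarrow> (\<exists>f\<in>sym_normalizer X G. \<forall>x\<in>T.
            kap x = perm_conj (perm_conj (lam (inv (gs (inv f x)) (inv f x))) (gs (inv f x))) f)"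
proof -
  interpret rack_env_pair X G T lam kap
    using assms(2-4) quandle_envelope_imp_rack_envelope
    by unfold_locales blast+
  have gs: "env_op G T lam y = perm_conj (lam (inv (gs y) y)) (gs y)" if "y \<in> X" for y
  proof (rule L.env_op_eq_conj[OF that])
    have "y \<in> perm_orbit G (env_rep G T y)"
      using L.env_rep(2)[OF that] unfolding perm_orbit_def by (simp add: image_iff eq_commute)
    then show "gs y \<in> G" "gs y (env_rep G T y) = y"
      using assms(5) L.env_rep(1)[OF that] by blast+
  qed
  have "(\<exists>\<phi>. groupoid_iso X (env_op G T lam) (env_op G T kap) \<phi>)
    \<longleftrightarrow> (\<exists>f\<in>sym_normalizer X G. \<forall>x\<in>T. kap x = perm_conj (env_op G T lam (inv f x)) f)"
    by (simp add: ex_groupoid_iso_iff_intertwiner L.env_op_permutes K.env_op_permutes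
        ex_intertwiner_iff_normalizer)
  also have "\<dots> \<longleftrightarrow> (\<exists>f\<in>sym_normalizer X G. \<forall>x\<in>T.
            kap x = perm_conj (perm_conj (lam (inv (gs (inv f x)) (inv f x))) (gs (inv f x))) f)"
    using gs L.T_subset
    by (intro bex_cong ball_cong refl)
       (auto simp: sym_normalizer_def permutes_in_image permutes_inv)
  finally show ?thesis .
qed

end
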